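(* For every elliptic modulus $\kappa\in[0,1)$ and every $n\in\mathbb{Z}$, the equation $$(-1)^n\kappa'\big(\mathrm{sc}_\kappa(x)+\mathrm{nc}_\kappa(x)\big)-2\,\mathrm{dc}_\kappa(x)=0$$ has no solution $x$ with $-K(\kappa)<x<K(\kappa)$.
   Context: $\kappa'=\sqrt{1-\kappa^2}$; $\mathrm{sn}_\kappa,\mathrm{cn}_\kappa,\mathrm{dn}_\kappa$ are the Jacobi elliptic functions with modulus $\kappa$, and Glaisher's notation is used: $\mathrm{sc}=\mathrm{sn}/\mathrm{cn}$, $\mathrm{nc}=1/\mathrm{cn}$, $\mathrm{dc}=\mathrm{dn}/\mathrm{cn}$. $K(\kappa)=\int_0^{\pi/2}(1-\kappa^2\sin^2\theta)^{-1/2}d\theta$ is the complete elliptic integral of the first kind. *)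

theory Defs
  imports "HOL-Analysis.Analysis"
begin

definition ellF :: "real \<Rightarrow> real \<Rightarrow> real" where
  "ellF k phi = (if 0 \<le> phi
      then integral {0..phi} (\<lambda>t. 1 / sqrt (1 - k\<^sup>2 * (sin t)\<^sup>2))
      else - integral {phi..0} (\<lambda>t. 1 / sqrt (1 - k\<^sup>2 * (sin t)\<^sup>2)))"

definition ellK :: "real \<Rightarrow> real" where
  "ellK k = integral {0..pi/2} (\<lambda>t. 1 / sqrt (1 - k\<^sup>2 * (sin t)\<^sup>2))"

definition jam :: "real \<Rightarrow> real \<Rightarrow> real" where
  "jam k u = (THE phi. ellF k phi = u)"

definition jsn :: "real \<Rightarrow> real \<Rightarrow> real" where
  "jsn k u = sin (jam k u)"

definition jcn :: "real \<Rightarrow> real \<Rightarrow> real" where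
  "jcn k u = cos (jam k u)"

definition jdn :: "real \<Rightarrow> real \<Rightarrow> real" where
  "jdn k u = sqrt (1 - k\<^sup>2 * (jsn k u)\<^sup>2)"

definition jsc :: "real \<Rightarrow> real \<Rightarrow> real" where
  "jsc k u = jsn k u / jcn k u"

definition jnc :: "real \<Rightarrow> real \<Rightarrow> real" where
  "jnc k u = 1 / jcn k u"

definition jdc :: "real \<Rightarrow> real \<Rightarrow> real" where
  "jdc k u = jdn k u / jcn k u"

end

theory Submission
  imports Defs
begin

text \<open>For \<open>\<bar>\<kappa>\<bar> < 1\<close> the amplitude map \<open>F(\<cdot>,\<kappa>)\<close> is continuous, odd and strictly
  increasing with slope between \<open>1\<close> and \<open>1/\<kappa>'\<close>, so it is a bijection of the reals whose
  inverse sends \<open>]-K, K[\<close> into \<open>]-\<pi>/2, \<pi>/2[\<close>. There \<open>cn > 0\<close> and \<open>\<bar>sn\<bar> < 1\<close>, and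
  multiplying the equation by \<open>cn\<close> turns it into \<open>\<plusminus>\<kappa>'(1 + sn) = 2 dn\<close>; this is impossible
  because \<open>\<kappa>'(1 + sn) < 2\<kappa>' \<le> 2 dn\<close>.\<close>

definition ell_integrand :: "real \<Rightarrow> real \<Rightarrow> real" where
  "ell_integrand k t = 1 / sqrt (1 - k\<^sup>2 * (sin t)\<^sup>2)"

lemma ell_radicand_bounds:
  fixes k t :: real
  shows "1 - k\<^sup>2 \<le> 1 - k\<^sup>2 * (sin t)\<^sup>2" "1 - k\<^sup>2 * (sin t)\<^sup>2 \<le> 1"
proof -
  have "(sin t)\<^sup>2 \<le> 1"
    by (simp add: abs_square_le_1)
  then show "1 - k\<^sup>2 \<le> 1 - k\<^sup>2 * (sin t)\<^sup>2"
    using mult_left_mono[of "(sin t)\<^sup>2" 1 "k\<^sup>2"] by simp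
qed simp

lemma ell_modulus_complement_pos:
  fixes k :: real
  assumes "\<bar>k\<bar> < 1"
  shows "0 < 1 - k\<^sup>2"
  using assms abs_square_less_1 by fastforce

lemma ell_radicand_pos:
  fixes k t :: real
  assumes "\<bar>k\<bar> < 1"
  shows "0 < 1 - k\<^sup>2 * (sin t)\<^sup>2"
  using ell_radicand_bounds(1)[of k t] ell_modulus_complement_pos[OF assms] by linarith

lemma ell_integrand_bounds:
  assumes "\<bar>k\<bar> < 1"
  shows "1 \<le> ell_integrand k t" "ell_integrand k t \<le> 1 / sqrt (1 - k\<^sup>2)"
proof -
  note pos = ell_radicand_pos[OF assms, of t] ell_modulus_complement_pos[OF assms]
  have "sqrt (1 - k\<^sup>2 * (sin t)\<^sup>2) \<le> 1"
    using ell_radicand_bounds(2) by simp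
  then show "1 \<le> ell_integrand k t"
    unfolding ell_integrand_def using pos by (simp add: field_simps)
  have "sqrt (1 - k\<^sup>2) \<le> sqrt (1 - k\<^sup>2 * (sin t)\<^sup>2)"
    using ell_radicand_bounds(1) by simp
  then show "ell_integrand k t \<le> 1 / sqrt (1 - k\<^sup>2)"
    unfolding ell_integrand_def using pos by (simp add: frac_le)
qed

lemma continuous_on_ell_integrand:
  assumes "\<bar>k\<bar> < 1"
  shows "continuous_on S (ell_integrand k)"
  unfolding ell_integrand_def
  using ell_radicand_pos[OF assms] by (intro continuous_intros) (auto simp: less_le)

lemma ell_integrand_integrable:
  assumes "\<bar>k\<bar> < 1"
  shows "ell_integrand k integrable_on {a..b}"
  by (rule integrable_continuous_interval[OF continuous_on_ell_integrand[OF assms]])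

lemma ell_integrand_minus: "ell_integrand k (- t) = ell_integrand k t"
  by (simp add: ell_integrand_def)

lemma ellF_eq_integral:
  "ellF k phi = (if 0 \<le> phi then integral {0..phi} (ell_integrand k)
                 else - integral {phi..0} (ell_integrand k))"
  unfolding ellF_def ell_integrand_def by simp

lemma ellF_diff:
  assumes "\<bar>k\<bar> < 1" "a \<le> b"
  shows "ellF k b - ellF k a = integral {a..b} (ell_integrand k)"
proof -
  note combine = Henstock_Kurzweil_Integration.integral_combine[OF _ _ ell_integrand_integrable[OF assms(1)]]
  consider "0 \<le> a" | "b < 0" | "a < 0" "0 \<le> b"
    by linarith
  then show ?thesis
    by cases (use combine[of 0 a b] combine[of a b 0] combine[of a 0 b] assms
        in \<open>simp_all add: ellF_eq_integral\<close>)
qed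

lemma ellF_diff_bounds:
  assumes "\<bar>k\<bar> < 1" "a \<le> b"
  shows "b - a \<le> ellF k b - ellF k a" "ellF k b - ellF k a \<le> (b - a) / sqrt (1 - k\<^sup>2)"
proof -
  have "integral {a..b} (\<lambda>_. 1) \<le> integral {a..b} (ell_integrand k)"
    by (intro integral_le) (auto simp: ell_integrand_integrable ell_integrand_bounds assms(1))
  moreover have "integral {a..b} (ell_integrand k) \<le> integral {a..b} (\<lambda>_. 1 / sqrt (1 - k\<^sup>2))"
    by (intro integral_le) (auto simp: ell_integrand_integrable ell_integrand_bounds assms(1))
  ultimately show "b - a \<le> ellF k b - ellF k a" "ellF k b - ellF k a \<le> (b - a) / sqrt (1 - k\<^sup>2)"
    using assms by (simp_all add: ellF_diff)
qed

lemma continuous_on_ellF: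
  assumes "\<bar>k\<bar> < 1"
  shows "continuous_on S (ellF k)"
proof (rule lipschitz_on_continuous_on[where L = "1 / sqrt (1 - k\<^sup>2)"], rule lipschitz_onI)
  show "0 \<le> 1 / sqrt (1 - k\<^sup>2)"
    using ell_modulus_complement_pos[OF assms] by simp
  have lip: "\<bar>ellF k x - ellF k y\<bar> \<le> 1 / sqrt (1 - k\<^sup>2) * \<bar>x - y\<bar>" if "y \<le> x" for x y
    using ellF_diff_bounds[OF assms that] that by simp
  show "dist (ellF k x) (ellF k y) \<le> 1 / sqrt (1 - k\<^sup>2) * dist x y" for x y
    using lip[of x y] lip[of y x] unfolding dist_real_def
    by (cases "y \<le> x") (simp_all add: abs_minus_commute)
qed

lemma strict_mono_ellF:
  assumes "\<bar>k\<bar> < 1"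
  shows "strict_mono (ellF k)"
proof (rule strict_monoI)
  show "ellF k a < ellF k b" if "a < b" for a b
    using ellF_diff_bounds(1)[OF assms, of a b] that by simp
qed

lemma ellF_0 [simp]: "ellF k 0 = 0"
  by (simp add: ellF_def)

lemma ellF_minus: "ellF k (- phi) = - ellF k phi"
proof -
  have reflect: "integral {- a..0} (ell_integrand k) = integral {0..a} (ell_integrand k)" for a
    using Henstock_Kurzweil_Integration.integral_reflect_real[of a 0 "ell_integrand k"]
    by (simp only: ell_integrand_minus minus_zero)
  show ?thesis
    using reflect[of phi] reflect[of "- phi"]
    by (cases phi "0 :: real" rule: linorder_cases) (simp_all add: ellF_eq_integral)
qed

lemma ellF_pi_half: "ellF k (pi / 2) = ellK k"
  by (simp add: ellF_def ellK_def)

lemma ellF_jam: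
  assumes "\<bar>k\<bar> < 1"
  shows "ellF k (jam k u) = u"
proof -
  have "\<bar>u\<bar> \<le> ellF k \<bar>u\<bar>"
    using ellF_diff_bounds(1)[OF assms, of 0 "\<bar>u\<bar>"] by simp
  then have "ellF k (- \<bar>u\<bar>) \<le> u" "u \<le> ellF k \<bar>u\<bar>"
    by (simp_all add: ellF_minus)
  then obtain phi where "ellF k phi = u"
    using IVT'[of "ellF k" "- \<bar>u\<bar>" u "\<bar>u\<bar>"] continuous_on_ellF[OF assms] by force
  moreover have "ellF k psi = u \<Longrightarrow> psi = phi" for psi
    using calculation strict_mono_eq[OF strict_mono_ellF[OF assms]] by metis
  ultimately have "jam k u = phi"
    unfolding jam_def by (rule the_equality)
  then show ?thesis
    using \<open>ellF k phi = u\<close> by simp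
qed

lemma abs_jam_less_pi_half:
  assumes "\<bar>k\<bar> < 1" "\<bar>u\<bar> < ellK k"
  shows "\<bar>jam k u\<bar> < pi / 2"
proof -
  note less_iff = strict_mono_less[OF strict_mono_ellF[OF assms(1)]]
  have "ellF k (- (pi / 2)) < ellF k (jam k u)" "ellF k (jam k u) < ellF k (pi / 2)"
    using assms by (simp_all add: ellF_jam ellF_minus ellF_pi_half)
  then show ?thesis
    unfolding less_iff by linarith
qed

lemma jdn_ge: "sqrt (1 - k\<^sup>2) \<le> jdn k u"
  unfolding jdn_def jsn_def using ell_radicand_bounds(1) by simp

lemma jcn_pos:
  assumes "\<bar>k\<bar> < 1" "\<bar>u\<bar> < ellK k"
  shows "0 < jcn k u"
  unfolding jcn_def using abs_jam_less_pi_half[OF assms] by (intro cos_gt_zero_pi) auto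

lemma abs_jsn_less_1:
  assumes "\<bar>k\<bar> < 1" "\<bar>u\<bar> < ellK k"
  shows "\<bar>jsn k u\<bar> < 1"
proof -
  have "(jsn k u)\<^sup>2 + (jcn k u)\<^sup>2 = 1"
    by (simp add: jsn_def jcn_def)
  then have "(jsn k u)\<^sup>2 < 1"
    using jcn_pos[OF assms] by (smt (verit) zero_less_power)
  then show ?thesis
    by (simp add: abs_square_less_1)
qed

lemma jsc_plus_jnc_bound:
  assumes "\<bar>k\<bar> < 1" "\<bar>u\<bar> < ellK k"
  shows "sqrt (1 - k\<^sup>2) * \<bar>jsc k u + jnc k u\<bar> < 2 * jdc k u"
proof -
  note cn = jcn_pos[OF assms] and sn = abs_jsn_less_1[OF assms]
  have kp: "0 < sqrt (1 - k\<^sup>2)"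
    using ell_modulus_complement_pos[OF assms(1)] by simp
  have "sqrt (1 - k\<^sup>2) * \<bar>jsn k u + 1\<bar> < sqrt (1 - k\<^sup>2) * 2"
    using sn kp by (intro mult_strict_left_mono) auto
  also have "\<dots> \<le> 2 * jdn k u"
    using jdn_ge[of k u] by simp
  finally show ?thesis
    using cn by (simp add: jsc_def jnc_def jdc_def add_divide_distrib[symmetric] field_simps)
qed

theorem mainTheorem12:
  fixes \<kappa> :: real and n :: int
  assumes "0 \<le> \<kappa>" and "\<kappa> < 1"
  shows "\<not> (\<exists>x. - ellK \<kappa> < x \<and> x < ellK \<kappa> \<and>
           (-1::real) powi n * sqrt (1 - \<kappa>\<^sup>2) * (jsc \<kappa> x + jnc \<kappa> x) - 2 * jdc \<kappa> x = 0)"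
proof
  assume "\<exists>x. - ellK \<kappa> < x \<and> x < ellK \<kappa> \<and>
           (-1::real) powi n * sqrt (1 - \<kappa>\<^sup>2) * (jsc \<kappa> x + jnc \<kappa> x) - 2 * jdc \<kappa> x = 0"
  then obtain x where "- ellK \<kappa> < x" "x < ellK \<kappa>"
    and eq: "(-1::real) powi n * sqrt (1 - \<kappa>\<^sup>2) * (jsc \<kappa> x + jnc \<kappa> x) = 2 * jdc \<kappa> x"
    by auto
  then have x: "\<bar>x\<bar> < ellK \<kappa>"
    by linarith
  have "\<bar>\<kappa>\<bar> < 1"
    using assms by simp
  have "\<bar>(-1::real) powi n * sqrt (1 - \<kappa>\<^sup>2) * (jsc \<kappa> x + jnc \<kappa> x)\<bar>
          = sqrt (1 - \<kappa>\<^sup>2) * \<bar>jsc \<kappa> x + jnc \<kappa> x\<bar>"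
    using ell_modulus_complement_pos[OF \<open>\<bar>\<kappa>\<bar> < 1\<close>] by (simp add: abs_mult power_int_abs)
  also have "\<dots> < 2 * jdc \<kappa> x"
    using jsc_plus_jnc_bound[OF \<open>\<bar>\<kappa>\<bar> < 1\<close> x] .
  finally show False
    unfolding eq by simp
qed

end
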